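(* Let $\alpha\in[0,1]$ and $\beta\in\mathbb{N}_{\ge1}$, and let $V^\alpha_\beta(x)=(1-\alpha)x+\alpha\min\{x,\beta\}$. Let $\rho=\big(1-\alpha\,\beta^\beta e^{-\beta}/\beta!\big)^{-1}$ and define $F^\alpha_\beta:\mathbb{N}_{\ge1}\to\mathbb{R}$ recursively by $F^\alpha_\beta(1)=V^\alpha_\beta(1)$ and $$F^\alpha_\beta(x+1)=\max\Big\{\tfrac1\beta\big[xF^\alpha_\beta(x)-V^\alpha_\beta(x)\rho\big]+1,\;1-\alpha\Big\},\qquad x\ge1.$$ Let $\mathcal{G}$ be the set of all resource allocation games (with any finite number of players) in which every resource has welfare function $V^\alpha_\beta$. If every resource is assigned the local utility function $F^\alpha_\beta$, then $\mathrm{PoA}(\mathcal{G})=1/\rho$, and no other choice of a common local utility function achieves a larger price of anarchy on $\mathcal{G}$.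
   Context: A resource allocation game consists of a finite player set $N=\{1,\dots,n\}$, a finite resource set $\mathcal{R}$, action sets $\mathcal{A}_i\subseteq 2^{\mathcal{R}}$, welfare functions $W_r:\mathbb{N}\to\mathbb{R}$ and local utility functions $F_r:\mathbb{N}\to\mathbb{R}$. For $a\in\mathcal{A}=\prod_i\mathcal{A}_i$, $|a|_r=|\{i: r\in a_i\}|$, $W(a)=\sum_{r\in\cup_ia_i}W_r(|a|_r)$, $U_i(a)=\sum_{r\in a_i}F_r(|a|_r)$. A pure Nash equilibrium is $a^{ne}$ with $U_i(a^{ne})\ge U_i(a_i,a^{ne}_{-i})$ for all $a_i\in\mathcal{A}_i$ and $i$. $\mathrm{PoA}(G)=\min_{a\in\mathrm{NE}(G)}W(a)/\max_{a\in\mathcal{A}}W(a)$; for a set of games, $\mathrm{PoA}$ is the infimum over the set. *)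

theory Defs
  imports Complex_Main "HOL-Library.FuncSet"
begin

text \<open>All resources share the same welfare
  function W and the same local utility function F.\<close>

definition load :: "nat \<Rightarrow> (nat \<Rightarrow> nat set) \<Rightarrow> nat \<Rightarrow> nat" where
  "load n a r = card {i \<in> {..<n}. r \<in> a i}"

definition welfare :: "(nat \<Rightarrow> real) \<Rightarrow> nat \<Rightarrow> (nat \<Rightarrow> nat set) \<Rightarrow> real" where
  "welfare W n a = (\<Sum>r \<in> (\<Union>i<n. a i). W (load n a r))"

definition utility :: "(nat \<Rightarrow> real) \<Rightarrow> nat \<Rightarrow> (nat \<Rightarrow> nat set) \<Rightarrow> nat \<Rightarrow> real" where
  "utility F n a i = (\<Sum>r \<in> a i. F (load n a r))"

definition profiles :: "nat \<Rightarrow> (nat \<Rightarrow> nat set set) \<Rightarrow> (nat \<Rightarrow> nat set) set" where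
  "profiles n A = PiE {..<n} A"

definition is_NE :: "(nat \<Rightarrow> real) \<Rightarrow> nat \<Rightarrow> (nat \<Rightarrow> nat set set) \<Rightarrow> (nat \<Rightarrow> nat set) \<Rightarrow> bool" where
  "is_NE F n A a \<longleftrightarrow> a \<in> profiles n A \<and>
     (\<forall>i<n. \<forall>b\<in>A i. utility F n (a(i := b)) i \<le> utility F n a i)"

definition valid_game :: "nat \<Rightarrow> nat set \<Rightarrow> (nat \<Rightarrow> nat set set) \<Rightarrow> bool" where
  "valid_game n R A \<longleftrightarrow> finite R \<and> (\<forall>i<n. A i \<noteq> {} \<and> A i \<subseteq> Pow R)"

definition opt_welfare :: "(nat \<Rightarrow> real) \<Rightarrow> nat \<Rightarrow> (nat \<Rightarrow> nat set set) \<Rightarrow> real" where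
  "opt_welfare W n A = Max (welfare W n ` profiles n A)"

text \<open>Price of anarchy of a single game (convention: 1 if the optimal welfare is 0).\<close>
definition poa :: "(nat \<Rightarrow> real) \<Rightarrow> (nat \<Rightarrow> real) \<Rightarrow> nat \<Rightarrow> (nat \<Rightarrow> nat set set) \<Rightarrow> real" where
  "poa W F n A = (if opt_welfare W n A = 0 then 1
     else Inf ((\<lambda>a. welfare W n a / opt_welfare W n A) ` {a. is_NE F n A a}))"

definition poa_class :: "(nat \<Rightarrow> real) \<Rightarrow> (nat \<Rightarrow> real) \<Rightarrow> real" where
  "poa_class W F = Inf {poa W F n A | n R A. valid_game n R A}"

definition Vab :: "real \<Rightarrow> nat \<Rightarrow> nat \<Rightarrow> real" where
  "Vab \<alpha> \<beta> x = (1 - \<alpha>) * real x + \<alpha> * real (min x \<beta>)"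

definition rho :: "real \<Rightarrow> nat \<Rightarrow> real" where
  "rho \<alpha> \<beta> = 1 / (1 - \<alpha> * real \<beta> ^ \<beta> * exp (- real \<beta>) / fact \<beta>)"

text \<open>F at 0 is irrelevant (never evaluated) and set to 0.\<close>
fun Fab :: "real \<Rightarrow> nat \<Rightarrow> nat \<Rightarrow> real" where
  "Fab \<alpha> \<beta> 0 = 0"
| "Fab \<alpha> \<beta> (Suc 0) = Vab \<alpha> \<beta> 1"
| "Fab \<alpha> \<beta> (Suc (Suc x)) =
     max ((1 / real \<beta>) * (real (Suc x) * Fab \<alpha> \<beta> (Suc x) - Vab \<alpha> \<beta> (Suc x) * rho \<alpha> \<beta>) + 1)
         (1 - \<alpha>)"

end

theory Submission
  imports Defs "HOL-Library.Nat_Bijection"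
begin

(* Upper bound: Fab satisfies, for all loads x, y, z, the resourcewise smoothness inequality
   V (y + z) <= rho * V (x + z) - x * F (x + z) + y * F (x + z + 1). Summing the equilibrium
   conditions of the deviations towards an optimal profile then gives W(opt) <= rho * W(ne).
   The inequality is checked on closed forms of the recursion, in terms of partial sums of
   the exponential series at beta, which also show that the cut-off at 1 - alpha never acts.

   Lower bound: for any F, cyclic games whose resource types a <= N are weighted by the
   Poisson weights beta^a / a! have an equilibrium whose welfare is at most
   1 / rho + beta^N / N! times the optimum. *)

section \<open>Loads, potential and Nash equilibria\<close>

lemma load_split:
  assumes "i < n"
  shows "load n a r = card {j\<in>{..<n}. j \<noteq> i \<and> r \<in> a j} + (if r \<in> a i then 1 else 0)"
proof (cases "r \<in> a i")
  case True
  then have "{j\<in>{..<n}. r \<in> a j} = insert i {j\<in>{..<n}. j \<noteq> i \<and> r \<in> a j}"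
    using assms by auto
  then show ?thesis using True unfolding load_def by simp
next
  case False
  then have "{j\<in>{..<n}. r \<in> a j} = {j\<in>{..<n}. j \<noteq> i \<and> r \<in> a j}" by auto
  then show ?thesis using False unfolding load_def by simp
qed

lemma load_fun_upd:
  assumes "i < n"
  shows "load n (a(i := b)) r = card {j\<in>{..<n}. j \<noteq> i \<and> r \<in> a j} + (if r \<in> b then 1 else 0)"
proof -
  have "{j\<in>{..<n}. j \<noteq> i \<and> r \<in> (a(i := b)) j} = {j\<in>{..<n}. j \<noteq> i \<and> r \<in> a j}" by auto
  then show ?thesis using load_split[OF assms, of "a(i := b)" r] by simp
qed

lemma finite_profiles: "valid_game n R A \<Longrightarrow> finite (profiles n A)"
  unfolding valid_game_def profiles_def
  by (intro finite_PiE) (auto intro: finite_subset)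

lemma profiles_nonempty: "valid_game n R A \<Longrightarrow> profiles n A \<noteq> {}"
  unfolding valid_game_def profiles_def PiE_eq_empty_iff by auto

lemma profile_subset: "valid_game n R A \<Longrightarrow> a \<in> profiles n A \<Longrightarrow> i < n \<Longrightarrow> a i \<subseteq> R"
  unfolding valid_game_def profiles_def by (auto dest!: PiE_mem)

lemma profiles_fun_upd: "a \<in> profiles n A \<Longrightarrow> i < n \<Longrightarrow> b \<in> A i \<Longrightarrow> a(i := b) \<in> profiles n A"
  using PiE_fun_upd[of b A i a "{..<n}"] unfolding profiles_def by (simp add: insert_absorb)

lemma welfare_eq_sum_resources:
  assumes G: "valid_game n R A" and a: "a \<in> profiles n A" and W0: "W 0 = 0"
  shows "welfare W n a = (\<Sum>r\<in>R. W (load n a r))"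
proof -
  have "(\<Union>i<n. a i) \<subseteq> R" using profile_subset[OF G a] by auto
  moreover have "finite R" using G unfolding valid_game_def by simp
  moreover have "W (load n a r) = 0" if "r \<in> R - (\<Union>i<n. a i)" for r
  proof -
    have "load n a r = 0" using that unfolding load_def by auto
    then show ?thesis using W0 by simp
  qed
  ultimately show ?thesis unfolding welfare_def by (intro sum.mono_neutral_left) auto
qed

lemma sum_sum_eq_count:
  fixes h :: "nat \<Rightarrow> real" and n :: nat
  assumes "finite R" "\<And>i. i < n \<Longrightarrow> S i \<subseteq> R"
  shows "(\<Sum>i<n. \<Sum>r\<in>S i. h r) = (\<Sum>r\<in>R. real (card {i\<in>{..<n}. r \<in> S i}) * h r)"
proof -
  have "(\<Sum>i<n. \<Sum>r\<in>S i. h r) = (\<Sum>i<n. \<Sum>r\<in>R. if r \<in> S i then h r else 0)"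
  proof (rule sum.cong[OF refl])
    fix i assume "i \<in> {..<n}"
    then have "R \<inter> S i = S i" using assms(2) by auto
    then show "(\<Sum>r\<in>S i. h r) = (\<Sum>r\<in>R. if r \<in> S i then h r else 0)"
      using sum.inter_restrict[OF assms(1), of h "S i"] by simp
  qed
  also have "\<dots> = (\<Sum>r\<in>R. \<Sum>i<n. if r \<in> S i then h r else 0)" by (rule sum.swap)
  also have "\<dots> = (\<Sum>r\<in>R. real (card {i\<in>{..<n}. r \<in> S i}) * h r)"
  proof (rule sum.cong[OF refl])
    fix r
    have "(\<Sum>i<n. if r \<in> S i then h r else 0) = (\<Sum>i\<in>{i\<in>{..<n}. r \<in> S i}. h r)"
      by (rule sum.inter_filter[symmetric]) simp
    then show "(\<Sum>i<n. if r \<in> S i then h r else 0) = real (card {i\<in>{..<n}. r \<in> S i}) * h r"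
      by simp
  qed
  finally show ?thesis .
qed

definition potential_term :: "(nat \<Rightarrow> real) \<Rightarrow> nat \<Rightarrow> real" where
  "potential_term F m = (\<Sum>k<m. F (Suc k))"

lemma utility_change_eq_potential_change:
  assumes G: "valid_game n R A" and a: "a \<in> profiles n A" and i: "i < n" and b: "b \<in> A i"
  shows "utility F n (a(i := b)) i - utility F n a i =
         (\<Sum>r\<in>R. potential_term F (load n (a(i := b)) r)) - (\<Sum>r\<in>R. potential_term F (load n a r))"
proof -
  define c where "c r = card {j\<in>{..<n}. j \<noteq> i \<and> r \<in> a j}" for r
  have fin: "finite R" using G unfolding valid_game_def by simp
  have load_a: "load n a r = c r + (if r \<in> a i then 1 else 0)" for r
    using load_split[OF i] c_def by simp
  have load_b: "load n (a(i := b)) r = c r + (if r \<in> b then 1 else 0)" for r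
    using load_fun_upd[OF i] c_def by simp
  have "b \<subseteq> R" using G i b unfolding valid_game_def by auto
  then have u1: "utility F n (a(i := b)) i = (\<Sum>r\<in>R. if r \<in> b then F (Suc (c r)) else 0)"
    unfolding utility_def load_b using fin
    by (simp add: sum.If_cases Int_absorb1)
  have "a i \<subseteq> R" using profile_subset[OF G a i] .
  then have u2: "utility F n a i = (\<Sum>r\<in>R. if r \<in> a i then F (Suc (c r)) else 0)"
    unfolding utility_def load_a using fin
    by (simp add: sum.If_cases Int_absorb1)
  have "potential_term F (load n (a(i := b)) r) - potential_term F (load n a r) =
      (if r \<in> b then F (Suc (c r)) else 0) - (if r \<in> a i then F (Suc (c r)) else 0)" for r
    unfolding load_a load_b potential_term_def by simp
  then show ?thesis unfolding u1 u2 sum_subtractf[symmetric] by simp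
qed

text \<open>Rosenthal's argument: by the previous lemma, a profile maximising the potential
  admits no profitable unilateral deviation.\<close>

lemma NE_exists:
  assumes G: "valid_game n R A"
  shows "\<exists>a. is_NE F n A a"
proof -
  define \<Phi> where "\<Phi> a = (\<Sum>r\<in>R. potential_term F (load n a r))" for a
  have fin: "finite (\<Phi> ` profiles n A)" using finite_profiles[OF G] by simp
  obtain a where a: "a \<in> profiles n A" "\<Phi> a = Max (\<Phi> ` profiles n A)"
    using Max_in[OF fin] profiles_nonempty[OF G] by fastforce
  have "is_NE F n A a"
    unfolding is_NE_def
  proof (intro conjI allI impI ballI)
    fix i b assume i: "i < n" and b: "b \<in> A i"
    have "\<Phi> (a(i := b)) \<le> \<Phi> a" unfolding a(2) using fin profiles_fun_upd[OF a(1) i b] by simp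
    then show "utility F n (a(i := b)) i \<le> utility F n a i"
      using utility_change_eq_potential_change[OF G a(1) i b, of F] unfolding \<Phi>_def by simp
  qed (rule a(1))
  then show ?thesis by blast
qed

section \<open>Smoothness bounds on the price of anarchy\<close>

lemma card_filter_split:
  fixes n :: nat
  shows "card {i\<in>{..<n}. P i} = card {i\<in>{..<n}. P i \<and> Q i} + card {i\<in>{..<n}. P i \<and> \<not> Q i}"
proof -
  have "{i\<in>{..<n}. P i} = {i\<in>{..<n}. P i \<and> Q i} \<union> {i\<in>{..<n}. P i \<and> \<not> Q i}" by auto
  then show ?thesis by (simp add: card_Un_disjoint disjoint_iff)
qed

lemma sum_utilities:
  assumes G: "valid_game n R A" and a: "a \<in> profiles n A"
  shows "(\<Sum>i<n. utility F n a i) = (\<Sum>r\<in>R. real (load n a r) * F (load n a r))"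
  using sum_sum_eq_count[of R n a "\<lambda>r. F (load n a r)"] G profile_subset[OF G a]
  unfolding utility_def valid_game_def load_def by simp

lemma sum_unilateral_deviations:
  assumes G: "valid_game n R A" and a: "a \<in> profiles n A" and b: "b \<in> profiles n A"
  shows "(\<Sum>i<n. utility F n (a(i := b i)) i) =
      (\<Sum>r\<in>R. real (card {i\<in>{..<n}. r \<in> b i \<and> r \<in> a i}) * F (load n a r))
    + (\<Sum>r\<in>R. real (card {i\<in>{..<n}. r \<in> b i \<and> r \<notin> a i}) * F (Suc (load n a r)))"
proof -
  have fin: "finite R" using G unfolding valid_game_def by simp
  have bR: "\<And>i. i < n \<Longrightarrow> b i \<subseteq> R" using profile_subset[OF G b] .
  have "utility F n (a(i := b i)) i =
      (\<Sum>r\<in>b i \<inter> a i. F (load n a r)) + (\<Sum>r\<in>b i - a i. F (Suc (load n a r)))" if i: "i < n" for i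
  proof -
    have "utility F n (a(i := b i)) i = (\<Sum>r\<in>b i. if r \<in> a i then F (load n a r) else F (Suc (load n a r)))"
      unfolding utility_def fun_upd_same load_fun_upd[OF i] load_split[OF i, of a] by (intro sum.cong) auto
    also have "\<dots> = (\<Sum>r\<in>b i \<inter> a i. F (load n a r)) + (\<Sum>r\<in>b i - a i. F (Suc (load n a r)))"
      using finite_subset[OF bR[OF i] fin] by (simp add: sum.If_cases Diff_eq)
    finally show ?thesis .
  qed
  then have "(\<Sum>i<n. utility F n (a(i := b i)) i) =
      (\<Sum>i<n. \<Sum>r\<in>b i \<inter> a i. F (load n a r)) + (\<Sum>i<n. \<Sum>r\<in>b i - a i. F (Suc (load n a r)))"
    by (simp add: sum.distrib)
  also have "\<dots> = (\<Sum>r\<in>R. real (card {i\<in>{..<n}. r \<in> b i \<and> r \<in> a i}) * F (load n a r))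
    + (\<Sum>r\<in>R. real (card {i\<in>{..<n}. r \<in> b i \<and> r \<notin> a i}) * F (Suc (load n a r)))"
    using sum_sum_eq_count[OF fin, of n "\<lambda>i. b i \<inter> a i" "\<lambda>r. F (load n a r)"]
      sum_sum_eq_count[OF fin, of n "\<lambda>i. b i - a i" "\<lambda>r. F (Suc (load n a r))"] bR
    by (simp add: le_infI1 subset_iff)
  finally show ?thesis .
qed

text \<open>Summing the equilibrium conditions for the deviations from \<open>a\<close> to \<open>b\<close>
  and splitting the load of each resource into the numbers \<open>x\<close>, \<open>y\<close>, \<open>z\<close> of players
  using it in \<open>a\<close> only, in \<open>b\<close> only and in both, the hypothesis on
  \<open>V\<close> and \<open>F\<close> can be applied resource by resource.\<close>

lemma welfare_le_smoothness:
  fixes F V :: "nat \<Rightarrow> real"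
  assumes G: "valid_game n R A" and NE: "is_NE F n A a" and b: "b \<in> profiles n A" and V0: "V 0 = 0"
    and smooth: "\<And>x y z. V (y + z) \<le> \<rho> * V (x + z) - real x * F (x + z) + real y * F (Suc (x + z))"
  shows "welfare V n b \<le> \<rho> * welfare V n a"
proof -
  have a: "a \<in> profiles n A" using NE unfolding is_NE_def by simp
  define l where "l r = load n a r" for r
  define x where "x r = card {i\<in>{..<n}. r \<in> a i \<and> r \<notin> b i}" for r
  define y where "y r = card {i\<in>{..<n}. r \<in> b i \<and> r \<notin> a i}" for r
  define z where "z r = card {i\<in>{..<n}. r \<in> b i \<and> r \<in> a i}" for r
  have lxz: "l r = x r + z r" for r
    unfolding l_def x_def z_def load_def card_filter_split[where P="\<lambda>i. r \<in> a i" and Q="\<lambda>i. r \<notin> b i"]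
    by (simp add: conj_commute)
  have byz: "load n b r = y r + z r" for r
    unfolding y_def z_def load_def card_filter_split[where P="\<lambda>i. r \<in> b i" and Q="\<lambda>i. r \<notin> a i"]
    by (simp add: add.commute)
  have per_resource: "V (load n b r) \<le> \<rho> * V (l r) - real (l r) * F (l r)
      + (real (z r) * F (l r) + real (y r) * F (Suc (l r)))" for r
    using smooth[of "y r" "z r" "x r"] unfolding byz lxz by (simp add: algebra_simps)
  have "(\<Sum>i<n. utility F n (a(i := b i)) i) \<le> (\<Sum>i<n. utility F n a i)"
    using NE b unfolding is_NE_def profiles_def by (intro sum_mono) auto
  then have deviations: "(\<Sum>r\<in>R. real (z r) * F (l r) + real (y r) * F (Suc (l r)))
      \<le> (\<Sum>r\<in>R. real (l r) * F (l r))"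
    unfolding sum_unilateral_deviations[OF G a b] sum_utilities[OF G a] sum.distrib l_def y_def z_def .
  have "welfare V n b = (\<Sum>r\<in>R. V (load n b r))" using welfare_eq_sum_resources[where W=V, OF G b V0] .
  also have "\<dots> \<le> (\<Sum>r\<in>R. \<rho> * V (l r) - real (l r) * F (l r)
      + (real (z r) * F (l r) + real (y r) * F (Suc (l r))))"
    using per_resource by (rule sum_mono)
  also have "\<dots> \<le> \<rho> * (\<Sum>r\<in>R. V (l r))"
    using deviations by (simp add: sum.distrib sum_subtractf sum_distrib_left)
  also have "(\<Sum>r\<in>R. V (l r)) = welfare V n a"
    unfolding l_def using welfare_eq_sum_resources[where W=V, OF G a V0] by simp
  finally show ?thesis .
qed

lemma welfare_nonneg: "(\<And>k. 0 \<le> V k) \<Longrightarrow> 0 \<le> welfare V n a"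
  unfolding welfare_def by (intro sum_nonneg) auto

lemma opt_welfare_attained:
  assumes "valid_game n R A"
  obtains b where "b \<in> profiles n A" "welfare W n b = opt_welfare W n A"
proof -
  have "opt_welfare W n A \<in> welfare W n ` profiles n A"
    unfolding opt_welfare_def using finite_profiles[OF assms] profiles_nonempty[OF assms]
    by (intro Max_in) auto
  then show ?thesis using that by auto
qed

lemma poa_ge:
  fixes V F :: "nat \<Rightarrow> real" and c :: real
  assumes G: "valid_game n R A" and V: "\<And>k. 0 \<le> V k" and c1: "c \<le> 1"
    and NE_ratio: "\<And>a. is_NE F n A a \<Longrightarrow> c * opt_welfare V n A \<le> welfare V n a"
  shows "c \<le> poa V F n A"
proof (cases "opt_welfare V n A = 0")
  case True
  then show ?thesis unfolding poa_def using c1 by simp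
next
  case False
  obtain b where "welfare V n b = opt_welfare V n A"
    using opt_welfare_attained[OF G] by blast
  then have pos: "0 < opt_welfare V n A" using False welfare_nonneg[of V n b, OF V] by simp
  obtain a where "is_NE F n A a" using NE_exists[OF G] by blast
  then have "c \<le> Inf ((\<lambda>a. welfare V n a / opt_welfare V n A) ` {a. is_NE F n A a})"
    using NE_ratio pos by (intro cInf_greatest) (auto simp: field_simps)
  then show ?thesis unfolding poa_def using False by simp
qed

lemma poa_nonneg: "valid_game n R A \<Longrightarrow> (\<And>k. 0 \<le> V k) \<Longrightarrow> 0 \<le> poa V F n A"
  by (rule poa_ge) (auto intro: welfare_nonneg)

lemma poa_le_welfare_ratio:
  assumes G: "valid_game n R A" and V: "\<And>k. 0 \<le> V k"
    and NE: "is_NE F n A a" and b: "b \<in> profiles n A" and pos: "0 < welfare V n b"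
  shows "poa V F n A \<le> welfare V n a / welfare V n b"
proof -
  have opt_ge: "welfare V n b \<le> opt_welfare V n A"
    unfolding opt_welfare_def using finite_profiles[OF G] b by (intro Max_ge) auto
  then have opt_pos: "0 < opt_welfare V n A" using pos by simp
  have "bdd_below ((\<lambda>a. welfare V n a / opt_welfare V n A) ` {a. is_NE F n A a})"
    using opt_pos welfare_nonneg[of V, OF V] by (intro bdd_belowI[of _ 0]) auto
  then have "poa V F n A \<le> welfare V n a / opt_welfare V n A"
    unfolding poa_def using opt_pos NE by (auto intro: cInf_lower)
  also have "\<dots> \<le> welfare V n a / welfare V n b"
    using pos opt_ge welfare_nonneg[of V, OF V] by (intro divide_left_mono) auto
  finally show ?thesis .
qed

lemma poa_ge_inverse_smoothness:
  fixes F V :: "nat \<Rightarrow> real"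
  assumes G: "valid_game n R A" and V: "\<And>k. 0 \<le> V k" and V0: "V 0 = 0" and \<rho>: "1 \<le> \<rho>"
    and smooth: "\<And>x y z. V (y + z) \<le> \<rho> * V (x + z) - real x * F (x + z) + real y * F (Suc (x + z))"
  shows "1 / \<rho> \<le> poa V F n A"
proof (rule poa_ge[OF G V])
  fix a assume NE: "is_NE F n A a"
  obtain b where b: "b \<in> profiles n A" "welfare V n b = opt_welfare V n A"
    using opt_welfare_attained[OF G] by blast
  show "1 / \<rho> * opt_welfare V n A \<le> welfare V n a"
    using welfare_le_smoothness[OF G NE b(1) V0 smooth] b(2) \<rho> by (simp add: field_simps)
qed (use \<rho> in simp)

lemma poa_class_nonempty: "{poa V F n A | n R A. valid_game n R A} \<noteq> {}"
proof -
  have "valid_game 0 {} A" for A unfolding valid_game_def by simp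
  then show ?thesis by blast
qed

lemma poa_class_le_poa:
  "valid_game n R A \<Longrightarrow> (\<And>k. 0 \<le> V k) \<Longrightarrow> poa_class V F \<le> poa V F n A"
  unfolding poa_class_def by (rule cInf_lower) (auto intro!: bdd_belowI[of _ 0] poa_nonneg)

lemma poa_class_ge:
  "(\<And>n R A. valid_game n R A \<Longrightarrow> c \<le> poa V F n A) \<Longrightarrow> c \<le> poa_class V F"
  unfolding poa_class_def by (rule cInf_greatest[OF poa_class_nonempty]) auto

section \<open>Cyclic games attaining a prescribed welfare ratio\<close>

text \<open>Each resource type \<open>t\<close> comes in \<open>n\<close> copies \<open>k < n\<close>, and player \<open>i\<close> sits at
  position \<open>cyclic_shift n i k = (i + k) mod n\<close> of copy \<open>k\<close>. Since this is a bijection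
  of \<open>{..<n}\<close> both in \<open>i\<close> and in \<open>k\<close>, a window of positions gives every copy the same
  load and every player the same number of copies.\<close>

definition cyclic_shift :: "nat \<Rightarrow> nat \<Rightarrow> nat \<Rightarrow> nat" where
  "cyclic_shift n i k = (if i + k < n then i + k else i + k - n)"

lemma bij_betw_lessThan_if_inj:
  assumes "inj_on f {..<n}" "\<And>i. i < n \<Longrightarrow> f i < (n::nat)"
  shows "bij_betw f {..<n} {..<n}"
proof -
  have "f ` {..<n} \<subseteq> {..<n}" using assms(2) by auto
  moreover have "card (f ` {..<n}) = card {..<n}" using card_image[OF assms(1)] by simp
  ultimately have "f ` {..<n} = {..<n}" by (intro card_subset_eq) auto
  then show ?thesis using assms(1) unfolding bij_betw_def by simp
qed

lemma bij_cyclic_shift_player: "k < n \<Longrightarrow> bij_betw (\<lambda>i. cyclic_shift n i k) {..<n} {..<n}"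
  by (rule bij_betw_lessThan_if_inj) (auto simp: inj_on_def cyclic_shift_def split: if_splits)

lemma bij_cyclic_shift_position: "i < n \<Longrightarrow> bij_betw (cyclic_shift n i) {..<n} {..<n}"
  by (rule bij_betw_lessThan_if_inj) (auto simp: inj_on_def cyclic_shift_def split: if_splits)

lemma card_bij_window:
  assumes f: "bij_betw f {..<n} {..<n}" and hi: "hi \<le> n"
  shows "card {i\<in>{..<n}. lo \<le> f i \<and> f i < hi} = hi - lo"
proof -
  have "inj_on f {i\<in>{..<n}. lo \<le> f i \<and> f i < hi}"
    using f unfolding bij_betw_def by (rule inj_on_subset[OF conjunct1]) auto
  moreover have "f ` {i\<in>{..<n}. lo \<le> f i \<and> f i < hi} = {lo..<hi}"
  proof
    show "{lo..<hi} \<subseteq> f ` {i\<in>{..<n}. lo \<le> f i \<and> f i < hi}"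
    proof
      fix j assume "j \<in> {lo..<hi}"
      then have "j \<in> f ` {..<n}" using f hi unfolding bij_betw_def by auto
      then show "j \<in> f ` {i\<in>{..<n}. lo \<le> f i \<and> f i < hi}" using \<open>j \<in> {lo..<hi}\<close> by auto
    qed
  qed auto
  ultimately show ?thesis using card_image by fastforce
qed

lemma sum_prod_encode_Sigma:
  fixes g :: "nat \<Rightarrow> real"
  assumes "finite T" "\<And>t. finite (S t)"
  shows "(\<Sum>r\<in>prod_encode ` (SIGMA t:T. S t). g r) = (\<Sum>t\<in>T. \<Sum>k\<in>S t. g (prod_encode (t, k)))"
proof -
  have "(\<Sum>r\<in>prod_encode ` (SIGMA t:T. S t). g r) = (\<Sum>p\<in>(SIGMA t:T. S t). g (prod_encode p))"
    using sum.reindex[OF inj_on_subset[OF inj_prod_encode subset_UNIV]] by (simp add: comp_def)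
  also have "\<dots> = (\<Sum>t\<in>T. \<Sum>k\<in>S t. g (prod_encode (t, k)))"
    using sum.Sigma[of T S "\<lambda>t k. g (prod_encode (t, k))"] assms by (simp add: split_def)
  finally show ?thesis .
qed

definition ring_eq_set :: "nat \<Rightarrow> nat set \<Rightarrow> (nat \<Rightarrow> nat) \<Rightarrow> nat \<Rightarrow> nat set" where
  "ring_eq_set n T X i = prod_encode ` (SIGMA t:T. {k\<in>{..<n}. cyclic_shift n i k < X t})"

definition ring_opt_set :: "nat \<Rightarrow> nat set \<Rightarrow> (nat \<Rightarrow> nat) \<Rightarrow> (nat \<Rightarrow> nat) \<Rightarrow> nat \<Rightarrow> nat set" where
  "ring_opt_set n T X Y i = prod_encode `
     (SIGMA t:T. {k\<in>{..<n}. X t \<le> cyclic_shift n i k \<and> cyclic_shift n i k < X t + Y t})"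

lemma prod_encode_in_ring_eq_set:
  "prod_encode (t, k) \<in> ring_eq_set n T X i \<longleftrightarrow> t \<in> T \<and> k < n \<and> cyclic_shift n i k < X t"
  unfolding ring_eq_set_def by (auto dest: inj_onD[OF inj_prod_encode])

lemma prod_encode_in_ring_opt_set:
  "prod_encode (t, k) \<in> ring_opt_set n T X Y i \<longleftrightarrow>
     t \<in> T \<and> k < n \<and> X t \<le> cyclic_shift n i k \<and> cyclic_shift n i k < X t + Y t"
  unfolding ring_opt_set_def by (auto dest: inj_onD[OF inj_prod_encode])

context
  fixes n :: nat and T :: "nat set" and X Y :: "nat \<Rightarrow> nat"
  assumes finite_T: "finite T" and window: "\<And>t. t \<in> T \<Longrightarrow> X t + Y t \<le> n"
begin

definition ring_actions :: "nat \<Rightarrow> nat set set" where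
  "ring_actions i = {ring_eq_set n T X i, ring_opt_set n T X Y i}"

definition ring_eq_profile :: "nat \<Rightarrow> nat set" where
  "ring_eq_profile = restrict (ring_eq_set n T X) {..<n}"

definition ring_opt_profile :: "nat \<Rightarrow> nat set" where
  "ring_opt_profile = restrict (ring_opt_set n T X Y) {..<n}"

lemma ring_valid_game: "valid_game n (prod_encode ` (T \<times> {..<n})) ring_actions"
  unfolding valid_game_def ring_actions_def ring_eq_set_def ring_opt_set_def
  using finite_T by auto

lemma ring_eq_profile_in_profiles: "ring_eq_profile \<in> profiles n ring_actions"
  unfolding ring_eq_profile_def profiles_def ring_actions_def by (auto simp: restrict_PiE_iff)

lemma ring_opt_profile_in_profiles: "ring_opt_profile \<in> profiles n ring_actions"
  unfolding ring_opt_profile_def profiles_def ring_actions_def by (auto simp: restrict_PiE_iff)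

lemma load_ring_eq_profile:
  assumes "t \<in> T" "k < n"
  shows "load n ring_eq_profile (prod_encode (t, k)) = X t"
proof -
  have "{i\<in>{..<n}. prod_encode (t, k) \<in> ring_eq_profile i} = {i\<in>{..<n}. 0 \<le> cyclic_shift n i k \<and> cyclic_shift n i k < X t}"
    unfolding ring_eq_profile_def using assms by (auto simp: prod_encode_in_ring_eq_set)
  then show ?thesis
    unfolding load_def using card_bij_window[OF bij_cyclic_shift_player[OF assms(2)], of "X t" 0] window[OF assms(1)]
    by simp
qed

lemma load_ring_opt_profile:
  assumes "t \<in> T" "k < n"
  shows "load n ring_opt_profile (prod_encode (t, k)) = Y t"
proof -
  have "{i\<in>{..<n}. prod_encode (t, k) \<in> ring_opt_profile i} =
      {i\<in>{..<n}. X t \<le> cyclic_shift n i k \<and> cyclic_shift n i k < X t + Y t}"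
    unfolding ring_opt_profile_def using assms by (auto simp: prod_encode_in_ring_opt_set)
  then show ?thesis
    unfolding load_def using card_bij_window[OF bij_cyclic_shift_player[OF assms(2)], of "X t + Y t" "X t"] window[OF assms(1)]
    by simp
qed

lemma load_ring_deviation:
  assumes i: "i < n" and "prod_encode (t, k) \<in> ring_opt_set n T X Y i"
  shows "load n (ring_eq_profile(i := ring_opt_set n T X Y i)) (prod_encode (t, k)) = Suc (X t)"
proof -
  have tk: "t \<in> T" "k < n" "X t \<le> cyclic_shift n i k"
    using assms(2) by (auto simp: prod_encode_in_ring_opt_set)
  then have "prod_encode (t, k) \<notin> ring_eq_profile i"
    unfolding ring_eq_profile_def using i by (simp add: prod_encode_in_ring_eq_set)
  then show ?thesis
    using load_fun_upd[OF i] load_split[OF i, of ring_eq_profile] load_ring_eq_profile[OF tk(1,2)] assms(2)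
    by simp
qed

lemma utility_ring_eq_profile:
  assumes i: "i < n"
  shows "utility F n ring_eq_profile i = (\<Sum>t\<in>T. real (X t) * F (X t))"
proof -
  have "utility F n ring_eq_profile i =
      (\<Sum>t\<in>T. \<Sum>k\<in>{k\<in>{..<n}. cyclic_shift n i k < X t}. F (load n ring_eq_profile (prod_encode (t, k))))"
    unfolding utility_def ring_eq_profile_def ring_eq_set_def using i
    by (simp add: sum_prod_encode_Sigma[OF finite_T])
  also have "\<dots> = (\<Sum>t\<in>T. real (X t) * F (X t))"
  proof (intro sum.cong refl)
    fix t assume t: "t \<in> T"
    have "card {k\<in>{..<n}. cyclic_shift n i k < X t} = X t"
      using card_bij_window[OF bij_cyclic_shift_position[OF i], of "X t" 0] window[OF t] by simp
    then show "(\<Sum>k\<in>{k\<in>{..<n}. cyclic_shift n i k < X t}. F (load n ring_eq_profile (prod_encode (t, k))))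
        = real (X t) * F (X t)"
      using load_ring_eq_profile[OF t] by simp
  qed
  finally show ?thesis .
qed

lemma utility_ring_deviation:
  assumes i: "i < n"
  shows "utility F n (ring_eq_profile(i := ring_opt_set n T X Y i)) i = (\<Sum>t\<in>T. real (Y t) * F (Suc (X t)))"
proof -
  let ?W = "\<lambda>t. {k\<in>{..<n}. X t \<le> cyclic_shift n i k \<and> cyclic_shift n i k < X t + Y t}"
  have "utility F n (ring_eq_profile(i := ring_opt_set n T X Y i)) i =
      (\<Sum>t\<in>T. \<Sum>k\<in>?W t. F (load n (ring_eq_profile(i := ring_opt_set n T X Y i)) (prod_encode (t, k))))"
    unfolding utility_def fun_upd_same unfolding ring_opt_set_def
    by (simp add: sum_prod_encode_Sigma[OF finite_T])
  also have "\<dots> = (\<Sum>t\<in>T. real (Y t) * F (Suc (X t)))"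
  proof (intro sum.cong refl)
    fix t assume t: "t \<in> T"
    have "card (?W t) = Y t"
      using card_bij_window[OF bij_cyclic_shift_position[OF i], of "X t + Y t" "X t"] window[OF t] by simp
    moreover have "prod_encode (t, k) \<in> ring_opt_set n T X Y i" if "k \<in> ?W t" for k
      using that t by (simp add: prod_encode_in_ring_opt_set)
    ultimately show "(\<Sum>k\<in>?W t. F (load n (ring_eq_profile(i := ring_opt_set n T X Y i)) (prod_encode (t, k))))
        = real (Y t) * F (Suc (X t))"
      using load_ring_deviation[OF i] by simp
  qed
  finally show ?thesis .
qed

lemma ring_eq_profile_is_NE:
  assumes "(\<Sum>t\<in>T. real (Y t) * F (Suc (X t))) \<le> (\<Sum>t\<in>T. real (X t) * F (X t))"
  shows "is_NE F n ring_actions ring_eq_profile"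
  unfolding is_NE_def
proof (intro conjI allI impI ballI)
  fix i b assume i: "i < n" and b: "b \<in> ring_actions i"
  show "utility F n (ring_eq_profile(i := b)) i \<le> utility F n ring_eq_profile i"
  proof (cases "b = ring_eq_set n T X i")
    case True
    then have "ring_eq_profile(i := b) = ring_eq_profile"
      unfolding ring_eq_profile_def using i by (auto simp: fun_eq_iff)
    then show ?thesis by simp
  next
    case False
    then have "b = ring_opt_set n T X Y i" using b unfolding ring_actions_def by auto
    then show ?thesis using utility_ring_eq_profile[OF i] utility_ring_deviation[OF i] assms by simp
  qed
qed (rule ring_eq_profile_in_profiles)

lemma welfare_ring_profiles:
  assumes "V 0 = 0"
  shows "welfare V n ring_eq_profile = real n * (\<Sum>t\<in>T. V (X t))"
    and "welfare V n ring_opt_profile = real n * (\<Sum>t\<in>T. V (Y t))"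
  using welfare_eq_sum_resources[where W=V, OF ring_valid_game ring_eq_profile_in_profiles assms]
    welfare_eq_sum_resources[where W=V, OF ring_valid_game ring_opt_profile_in_profiles assms]
  by (simp_all add: sum_prod_encode_Sigma[OF finite_T, where S="\<lambda>_. {..<n}", simplified]
      load_ring_eq_profile load_ring_opt_profile sum_distrib_left)

end

lemma ring_game_poa_le:
  fixes F V :: "nat \<Rightarrow> real" and T :: "nat set" and X Y :: "nat \<Rightarrow> nat" and n :: nat
  assumes finite_T: "finite T" and n: "0 < n" and window: "\<And>t. t \<in> T \<Longrightarrow> X t + Y t \<le> n"
    and eq_condition: "(\<Sum>t\<in>T. real (Y t) * F (Suc (X t))) \<le> (\<Sum>t\<in>T. real (X t) * F (X t))"
    and V0: "V 0 = 0" and V: "\<And>k. 0 \<le> V k" and pos: "0 < (\<Sum>t\<in>T. V (Y t))"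
  shows "\<exists>R A. valid_game n R A \<and> poa V F n A \<le> (\<Sum>t\<in>T. V (X t)) / (\<Sum>t\<in>T. V (Y t))"
proof (intro exI conjI)
  note welfare = welfare_ring_profiles[where V=V, OF finite_T window V0]
  have "poa V F n (ring_actions n T X Y) \<le>
      welfare V n (ring_eq_profile n T X) / welfare V n (ring_opt_profile n T X Y)"
    using ring_valid_game[OF finite_T window] V ring_eq_profile_is_NE[OF finite_T window eq_condition]
      ring_opt_profile_in_profiles[OF finite_T window] n pos
    by (intro poa_le_welfare_ratio) (auto simp: welfare)
  then show "poa V F n (ring_actions n T X Y) \<le> (\<Sum>t\<in>T. V (X t)) / (\<Sum>t\<in>T. V (Y t))"
    using n by (simp add: welfare)
qed (rule ring_valid_game[OF finite_T window])

lemma ring_game_copies_poa_le: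
  fixes F V :: "nat \<Rightarrow> real" and m X Y :: "nat \<Rightarrow> nat" and I :: "nat set" and n :: nat
  assumes finite_I: "finite I" and n: "0 < n" and window: "\<And>a. a \<in> I \<Longrightarrow> X a + Y a \<le> n"
    and eq_condition: "(\<Sum>a\<in>I. real (m a) * (real (Y a) * F (Suc (X a))))
                       \<le> (\<Sum>a\<in>I. real (m a) * (real (X a) * F (X a)))"
    and V0: "V 0 = 0" and V: "\<And>k. 0 \<le> V k" and pos: "0 < (\<Sum>a\<in>I. real (m a) * V (Y a))"
  shows "\<exists>R A. valid_game n R A \<and>
           poa V F n A \<le> (\<Sum>a\<in>I. real (m a) * V (X a)) / (\<Sum>a\<in>I. real (m a) * V (Y a))"
proof -
  define T where "T = prod_encode ` (SIGMA a:I. {..<m a})"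
  define type where "type t = fst (prod_decode t)" for t
  have sum_T: "(\<Sum>t\<in>T. h (type t)) = (\<Sum>a\<in>I. real (m a) * h a)" for h :: "nat \<Rightarrow> real"
    unfolding T_def type_def using finite_I by (simp add: sum_prod_encode_Sigma)
  have eq_T: "(\<Sum>t\<in>T. real (Y (type t)) * F (Suc (X (type t)))) \<le> (\<Sum>t\<in>T. real (X (type t)) * F (X (type t)))"
    using eq_condition sum_T[of "\<lambda>a. real (Y a) * F (Suc (X a))"] sum_T[of "\<lambda>a. real (X a) * F (X a)"]
    by (simp add: sum_T)
  have "\<exists>R A. valid_game n R A \<and> poa V F n A \<le> (\<Sum>t\<in>T. V (X (type t))) / (\<Sum>t\<in>T. V (Y (type t)))"
  proof (rule ring_game_poa_le[where X="\<lambda>t. X (type t)" and Y="\<lambda>t. Y (type t)" and V=V, OF _ n _ eq_T V0 V])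
    show "finite T" unfolding T_def using finite_I by simp
    show "X (type t) + Y (type t) \<le> n" if "t \<in> T" for t
      using that window unfolding T_def type_def by auto
    show "0 < (\<Sum>t\<in>T. V (Y (type t)))" using pos sum_T[of "\<lambda>a. V (Y a)"] by simp
  qed
  then show ?thesis using sum_T[of "\<lambda>a. V (X a)"] sum_T[of "\<lambda>a. V (Y a)"] by simp
qed

section \<open>Terms of the exponential series\<close>

definition exp_term :: "nat \<Rightarrow> nat \<Rightarrow> real" where
  "exp_term b j = real b ^ j / fact j"

lemma exp_term_0 [simp]: "exp_term b 0 = 1"
  by (simp add: exp_term_def)

lemma exp_term_nonneg: "0 \<le> exp_term b j"
  by (simp add: exp_term_def)

lemma exp_term_pos: "0 < b \<Longrightarrow> 0 < exp_term b j"
  by (simp add: exp_term_def)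

lemma exp_term_Suc: "exp_term b (Suc j) = exp_term b j * real b / real (Suc j)"
  by (simp add: exp_term_def field_simps)

lemma exp_term_pred: "0 < b \<Longrightarrow> exp_term b (b - 1) = exp_term b b"
  by (cases b) (simp_all add: exp_term_Suc)

lemma sums_exp_term: "exp_term b sums exp (real b)"
  unfolding exp_term_def using exp_converges[of "real b"] by (simp add: divide_inverse mult.commute)

lemma exp_term_tendsto_0: "exp_term b \<longlonglongrightarrow> 0"
  using sums_exp_term summable_LIMSEQ_zero sums_summable by blast

lemma sums_exp_term_tail: "(\<lambda>i. exp_term b (i + a)) sums (exp (real b) - (\<Sum>j<a. exp_term b j))"
  using sums_exp_term sums_iff_shift' by blast

lemma sum_exp_term_le_exp: "(\<Sum>j<a. exp_term b j) \<le> exp (real b)"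
  using sums_exp_term_tail[of b a] suminf_nonneg[of "\<lambda>i. exp_term b (i + a)"]
  by (auto simp: sums_iff exp_term_nonneg)

lemma exp_tail_le:
  assumes "b < a"
  shows "exp (real b) - (\<Sum>j<a. exp_term b j) \<le> exp_term b a / (1 - real b / real a)"
proof -
  have le: "exp_term b (k + a) \<le> exp_term b a * (real b / real a) ^ k" for k
  proof (induction k)
    case (Suc k)
    have "exp_term b (Suc k + a) = exp_term b (k + a) * real b / real (Suc (k + a))"
      by (simp add: exp_term_Suc)
    also have "\<dots> \<le> exp_term b (k + a) * real b / real a"
      using assms exp_term_nonneg[of b "k + a"] by (intro divide_left_mono) auto
    also have "\<dots> \<le> exp_term b a * (real b / real a) ^ k * real b / real a"
      using Suc by (intro divide_right_mono mult_right_mono) auto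
    finally show ?case by (simp add: field_simps)
  qed simp
  have geometric: "(\<lambda>k. exp_term b a * (real b / real a) ^ k) sums (exp_term b a / (1 - real b / real a))"
    using sums_mult[OF geometric_sums[of "real b / real a"], of "exp_term b a"] assms by simp
  show ?thesis by (rule sums_le[OF _ sums_exp_term_tail geometric]) (rule le)
qed

lemma sum_exp_term_mult_index: "(\<Sum>j\<le>K. exp_term b j * real j) = real b * (\<Sum>j<K. exp_term b j)"
proof (induction K)
  case (Suc K)
  have "exp_term b (Suc K) * real (Suc K) = real b * exp_term b K" by (simp add: exp_term_Suc)
  then show ?case using Suc by (simp add: algebra_simps)
qed simp

definition poisson_peak :: "nat \<Rightarrow> real" where
  "poisson_peak b = exp_term b b * exp (- real b)"

lemma rho_eq_poisson_peak: "rho \<alpha> b = 1 / (1 - \<alpha> * poisson_peak b)"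
  by (simp add: rho_def poisson_peak_def exp_term_def)

lemma poisson_peak_pos: "0 < b \<Longrightarrow> 0 < poisson_peak b"
  by (simp add: poisson_peak_def exp_term_pos)

lemma poisson_peak_less_1:
  assumes "0 < b"
  shows "poisson_peak b < 1"
proof -
  have "1 + exp_term b b = (\<Sum>j\<in>{0, b}. exp_term b j)" using assms by simp
  also have "\<dots> \<le> (\<Sum>j<Suc b. exp_term b j)"
    by (intro sum_mono2) (auto simp: exp_term_nonneg)
  also have "\<dots> \<le> exp (real b)" by (rule sum_exp_term_le_exp)
  finally have "exp_term b b < exp (real b)" by simp
  then show ?thesis
    unfolding poisson_peak_def by (simp add: exp_minus field_simps)
qed

definition scaled_head :: "nat \<Rightarrow> nat \<Rightarrow> real" where
  "scaled_head b a = (\<Sum>j<a - 1. exp_term b j) / exp_term b (a - 1)"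

definition scaled_tail :: "nat \<Rightarrow> nat \<Rightarrow> real" where
  "scaled_tail b a = (exp (real b) - (\<Sum>j<a. exp_term b j)) / exp_term b (a - 1)"

lemma scaled_head_nonneg: "0 \<le> scaled_head b a"
  unfolding scaled_head_def by (intro divide_nonneg_nonneg sum_nonneg) (auto simp: exp_term_nonneg)

lemma scaled_tail_nonneg: "0 \<le> scaled_tail b a"
  unfolding scaled_tail_def using sum_exp_term_le_exp[of b a] exp_term_nonneg[of b "a - 1"] by simp

context
  fixes b :: nat
  assumes b: "0 < b"
begin

lemma scaled_head_Suc:
  assumes "1 \<le> a"
  shows "scaled_head b (Suc a) = real a / real b * (1 + scaled_head b a)"
proof -
  obtain c where a: "a = Suc c" using assms by (cases a) auto
  have e: "exp_term b a = exp_term b c * real b / real a" unfolding a by (rule exp_term_Suc)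
  have head_Suc: "scaled_head b (Suc a) = ((\<Sum>j<c. exp_term b j) + exp_term b c) / exp_term b a"
    by (simp add: scaled_head_def a)
  have head: "scaled_head b a = (\<Sum>j<c. exp_term b j) / exp_term b c"
    by (simp add: scaled_head_def a)
  show ?thesis
    unfolding head_Suc head e using exp_term_pos[OF b, of c] b assms by (simp add: field_simps)
qed

lemma scaled_tail_Suc:
  assumes "1 \<le> a"
  shows "scaled_tail b (Suc a) = real a / real b * scaled_tail b a - 1"
proof -
  obtain c where a: "a = Suc c" using assms by (cases a) auto
  have e: "exp_term b a = exp_term b c * real b / real a" unfolding a by (rule exp_term_Suc)
  have tail_Suc: "scaled_tail b (Suc a) = (exp (real b) - (\<Sum>j<a. exp_term b j) - exp_term b a) / exp_term b a"
    by (simp add: scaled_tail_def)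
  have tail: "scaled_tail b a = (exp (real b) - (\<Sum>j<a. exp_term b j)) / exp_term b c"
    by (simp add: scaled_tail_def a)
  show ?thesis
    unfolding tail_Suc tail e using exp_term_pos[OF b, of c] b assms by (simp add: field_simps)
qed

lemma scaled_head_bound: "1 \<le> a \<Longrightarrow> a \<le> b \<Longrightarrow> scaled_head b a * (real b - real a + 1) \<le> real a - 1"
proof (induction a rule: dec_induct)
  case (step a)
  have IH: "(1 + scaled_head b a) * (real b - real a + 1) \<le> real b"
    using step by (simp add: algebra_simps)
  have "scaled_head b (Suc a) * (real b - real (Suc a) + 1) = real a / real b * (1 + scaled_head b a) * (real b - real a)"
    using scaled_head_Suc[OF step(1)] by simp
  also have "\<dots> \<le> real a / real b * (1 + scaled_head b a) * (real b - real a + 1)"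
    using scaled_head_nonneg[of b a] by (intro mult_left_mono) auto
  also have "\<dots> = real a / real b * ((1 + scaled_head b a) * (real b - real a + 1))" by simp
  also have "\<dots> \<le> real a / real b * real b" using IH by (intro mult_left_mono) auto
  finally show ?case using b by simp
qed (simp add: scaled_head_def)

lemma scaled_head_le: "1 \<le> a \<Longrightarrow> a \<le> b \<Longrightarrow> scaled_head b a \<le> scaled_head b b"
proof (rule lift_Suc_mono_le_ivl[where N = "{1..<b}"])
  fix m assume "m \<in> {1..<b}"
  then have m: "1 \<le> m" "m < b" by auto
  have "real b * scaled_head b m \<le> real m * (1 + scaled_head b m)"
    using scaled_head_bound[OF m(1)] m scaled_head_nonneg[of b m] by (simp add: algebra_simps)
  also have "\<dots> = real b * scaled_head b (Suc m)"
    using scaled_head_Suc[OF m(1)] b by simp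
  finally show "scaled_head b m \<le> scaled_head b (Suc m)" using b by simp
qed auto

lemma scaled_tail_bound:
  assumes "b < a"
  shows "(real a - real b) * scaled_tail b a \<le> real b"
proof -
  have e: "exp_term b a = exp_term b (a - 1) * (real b / real a)"
    using assms exp_term_Suc[of b "a - 1"] by (cases a) simp_all
  have "scaled_tail b a \<le> exp_term b a / (1 - real b / real a) / exp_term b (a - 1)"
    unfolding scaled_tail_def by (rule divide_right_mono[OF exp_tail_le[OF assms] exp_term_nonneg])
  also have "\<dots> = real b / (real a - real b)"
    unfolding e using assms exp_term_pos[OF b, of "a - 1"] by (simp add: field_simps)
  finally show ?thesis using assms by (simp add: field_simps)
qed

lemma scaled_tail_le: "b \<le> a \<Longrightarrow> scaled_tail b a \<le> scaled_tail b b"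
proof (induction a rule: dec_induct)
  case (step a)
  have rec: "real b * scaled_tail b (Suc a) = real a * scaled_tail b a - real b"
    using scaled_tail_Suc[of a] step(1) b by (simp add: field_simps)
  have "real b * scaled_tail b (Suc a) \<le> real b * scaled_tail b a"
  proof (cases "a = b")
    case False
    then show ?thesis using scaled_tail_bound[of a] step(1) rec by (simp add: algebra_simps)
  qed (use rec in simp)
  then show ?case using step(3) b by simp
qed simp

lemma scaled_sums_at_peak:
  "exp_term b b * (scaled_head b b + scaled_tail b b) = exp (real b) - exp_term b b"
proof -
  have "(\<Sum>j<b. exp_term b j) = (\<Sum>j<b - 1. exp_term b j) + exp_term b b"
    using b exp_term_pred[OF b] by (cases b) simp_all
  then show ?thesis
    using exp_term_pred[OF b] exp_term_pos[OF b, of b]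
    by (simp add: scaled_head_def scaled_tail_def field_simps)
qed

lemma poisson_peak_scaled_sum:
  "poisson_peak b * (scaled_head b b + scaled_tail b b) = 1 - poisson_peak b"
proof -
  have "poisson_peak b * (scaled_head b b + scaled_tail b b) =
      exp (- real b) * (exp_term b b * (scaled_head b b + scaled_tail b b))"
    unfolding poisson_peak_def by simp
  also have "\<dots> = exp (- real b) * exp (real b) - poisson_peak b"
    unfolding scaled_sums_at_peak poisson_peak_def by (simp add: algebra_simps)
  finally show ?thesis by (simp add: exp_minus_inverse mult.commute)
qed

lemma poisson_peak_scaled_tail_le: "poisson_peak b * (1 + scaled_tail b b) \<le> 1"
proof -
  have "poisson_peak b * (1 + scaled_tail b b) = 1 - poisson_peak b * scaled_head b b"
    using poisson_peak_scaled_sum by (simp add: algebra_simps)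
  then show ?thesis using poisson_peak_pos[OF b] scaled_head_nonneg[of b b] by simp
qed

end

section \<open>The recursively defined utility function\<close>

lemma Vab_below: "x \<le> b \<Longrightarrow> Vab \<alpha> b x = real x"
  by (simp add: Vab_def algebra_simps)

lemma Vab_above: "b \<le> x \<Longrightarrow> Vab \<alpha> b x = (1 - \<alpha>) * real x + \<alpha> * real b"
  by (simp add: Vab_def)

lemma Vab_nonneg: "0 \<le> \<alpha> \<Longrightarrow> \<alpha> \<le> 1 \<Longrightarrow> 0 \<le> Vab \<alpha> b x"
  by (simp add: Vab_def)

lemma Vab_0 [simp]: "Vab \<alpha> b 0 = 0"
  by (simp add: Vab_def)

lemma Vab_le: "0 \<le> \<alpha> \<Longrightarrow> Vab \<alpha> b x \<le> real x"
  unfolding Vab_def by (simp add: algebra_simps mult_left_mono)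

lemma Vab_smoothness_by_cases:
  fixes x y z b \<rho> \<alpha> f g Va Vt :: real
  assumes y0: "0 \<le> y"
    and affine: "z \<le> b \<Longrightarrow> 0 \<le> \<rho> * Va - b + (b - (x + z)) * g + x * (g - f)"
    and above: "b < z \<Longrightarrow> (x + z - b) * f + b \<le> \<rho> * Va"
    and g: "1 - \<alpha> \<le> g" "g \<le> 1" and f: "1 - \<alpha> \<le> f"
    and Vt_below: "y + z \<le> b \<Longrightarrow> Vt = y + z"
    and Vt_above: "b \<le> y + z \<Longrightarrow> Vt = (1 - \<alpha>) * (y + z) + \<alpha> * b"
  shows "Vt \<le> \<rho> * Va - x * f + y * g"
proof (cases "y + z \<le> b")
  case True
  have "y * (1 - g) \<le> (b - z) * (1 - g)" using True g by (intro mult_right_mono) auto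
  then show ?thesis using Vt_below[OF True] affine True y0 by (simp add: algebra_simps)
next
  case False
  then have Vt: "Vt = (1 - \<alpha>) * (y + z) + \<alpha> * b" using Vt_above by simp
  show ?thesis
  proof (cases "z \<le> b")
    case True
    have "(b - z) * (g - (1 - \<alpha>)) \<le> y * (g - (1 - \<alpha>))" using False g by (intro mult_right_mono) auto
    then show ?thesis unfolding Vt using affine[OF True] by (simp add: algebra_simps)
  next
    case False
    have "0 \<le> y * (g - (1 - \<alpha>))" using y0 g by simp
    moreover have "(z - b) * (1 - \<alpha>) \<le> (z - b) * f" using False f by (intro mult_left_mono) auto
    ultimately show ?thesis unfolding Vt using above False by (simp add: algebra_simps)
  qed
qed

text \<open>The recursion defining \<open>Fab\<close> without the lower cut-off at \<open>1 - \<alpha>\<close>; the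
  cut-off turns out never to be active.\<close>

fun Fab_unclamped :: "real \<Rightarrow> nat \<Rightarrow> nat \<Rightarrow> real" where
  "Fab_unclamped \<alpha> \<beta> 0 = 0"
| "Fab_unclamped \<alpha> \<beta> (Suc 0) = Vab \<alpha> \<beta> 1"
| "Fab_unclamped \<alpha> \<beta> (Suc (Suc x)) =
     (1 / real \<beta>) * (real (Suc x) * Fab_unclamped \<alpha> \<beta> (Suc x) - Vab \<alpha> \<beta> (Suc x) * rho \<alpha> \<beta>) + 1"

context
  fixes \<alpha> :: real and \<beta> :: nat
  assumes \<alpha>0: "0 \<le> \<alpha>" and \<alpha>1: "\<alpha> \<le> 1" and \<beta>1: "1 \<le> \<beta>"
begin

private lemma \<beta>_pos: "0 < \<beta>"
  using \<beta>1 by simp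

lemma one_minus_alpha_poisson_peak_pos: "0 < 1 - \<alpha> * poisson_peak \<beta>"
proof -
  have "\<alpha> * poisson_peak \<beta> \<le> poisson_peak \<beta>"
    using \<alpha>1 poisson_peak_pos[OF \<beta>_pos] by (simp add: mult_left_le_one_le)
  then show ?thesis using poisson_peak_less_1[OF \<beta>_pos] by linarith
qed

lemma rho_ge_1: "1 \<le> rho \<alpha> \<beta>"
  using one_minus_alpha_poisson_peak_pos \<alpha>0 poisson_peak_pos[OF \<beta>_pos]
  by (simp add: rho_eq_poisson_peak field_simps)

lemma rho_minus_1: "rho \<alpha> \<beta> - 1 = rho \<alpha> \<beta> * \<alpha> * poisson_peak \<beta>"
  using one_minus_alpha_poisson_peak_pos by (simp add: rho_eq_poisson_peak field_simps)

lemma Fab_unclamped_Suc: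
  "1 \<le> a \<Longrightarrow> real \<beta> * Fab_unclamped \<alpha> \<beta> (Suc a) = real a * Fab_unclamped \<alpha> \<beta> a - rho \<alpha> \<beta> * Vab \<alpha> \<beta> a + real \<beta>"
  using \<beta>1 by (cases a) (simp_all add: field_simps)

lemma Fab_unclamped_below_peak:
  "1 \<le> a \<Longrightarrow> a \<le> Suc \<beta> \<Longrightarrow> Fab_unclamped \<alpha> \<beta> a = 1 - (rho \<alpha> \<beta> - 1) * scaled_head \<beta> a"
proof (induction a rule: dec_induct)
  case base
  then show ?case using \<beta>1 by (simp add: Vab_below scaled_head_def)
next
  case (step a)
  have rec: "real \<beta> * Fab_unclamped \<alpha> \<beta> (Suc a) = real a * Fab_unclamped \<alpha> \<beta> a - rho \<alpha> \<beta> * real a + real \<beta>"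
    using Fab_unclamped_Suc[OF step(1)] Vab_below[of a \<beta> \<alpha>] step.prems by simp
  have IH: "Fab_unclamped \<alpha> \<beta> a = 1 - (rho \<alpha> \<beta> - 1) * scaled_head \<beta> a"
    using step by simp
  have head: "real \<beta> * scaled_head \<beta> (Suc a) = real a * (1 + scaled_head \<beta> a)"
    using scaled_head_Suc[OF \<beta>_pos step(1)] \<beta>_pos by simp
  have "real \<beta> * Fab_unclamped \<alpha> \<beta> (Suc a) = real \<beta> * (1 - (rho \<alpha> \<beta> - 1) * scaled_head \<beta> (Suc a))"
    using rec IH head by algebra
  then show ?case using \<beta>_pos by simp
qed

lemma Fab_unclamped_at_peak:
  "Fab_unclamped \<alpha> \<beta> \<beta> = rho \<alpha> \<beta> * (1 - \<alpha>) + (rho \<alpha> \<beta> - 1) * scaled_tail \<beta> \<beta>"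
proof -
  have peak: "Fab_unclamped \<alpha> \<beta> \<beta> = 1 - (rho \<alpha> \<beta> - 1) * scaled_head \<beta> \<beta>"
    using Fab_unclamped_below_peak[of \<beta>] \<beta>1 by simp
  show ?thesis
    using peak rho_minus_1 poisson_peak_scaled_sum[OF \<beta>_pos] by algebra
qed

lemma Fab_unclamped_above_peak:
  "\<beta> \<le> a \<Longrightarrow> Fab_unclamped \<alpha> \<beta> a = rho \<alpha> \<beta> * (1 - \<alpha>) + (rho \<alpha> \<beta> - 1) * scaled_tail \<beta> a"
proof (induction a rule: dec_induct)
  case base
  then show ?case by (rule Fab_unclamped_at_peak)
next
  case (step a)
  have a: "1 \<le> a" using step(1) \<beta>1 by simp
  have rec: "real \<beta> * Fab_unclamped \<alpha> \<beta> (Suc a) =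
      real a * Fab_unclamped \<alpha> \<beta> a - rho \<alpha> \<beta> * ((1 - \<alpha>) * real a + \<alpha> * real \<beta>) + real \<beta>"
    using Fab_unclamped_Suc[OF a] step(1) Vab_above[of \<beta> a \<alpha>] by simp
  have tail: "real \<beta> * scaled_tail \<beta> (Suc a) = real a * scaled_tail \<beta> a - real \<beta>"
    using scaled_tail_Suc[OF \<beta>_pos a] \<beta>_pos by (simp add: field_simps)
  have "real \<beta> * Fab_unclamped \<alpha> \<beta> (Suc a) =
      real \<beta> * (rho \<alpha> \<beta> * (1 - \<alpha>) + (rho \<alpha> \<beta> - 1) * scaled_tail \<beta> (Suc a))"
    using rec step(3) tail by algebra
  then show ?case using \<beta>_pos by simp
qed

lemma Fab_unclamped_ge: "1 \<le> a \<Longrightarrow> 1 - \<alpha> \<le> Fab_unclamped \<alpha> \<beta> a"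
proof -
  have above: "1 - \<alpha> \<le> Fab_unclamped \<alpha> \<beta> a" if "\<beta> \<le> a" for a
  proof -
    have "1 - \<alpha> \<le> rho \<alpha> \<beta> * (1 - \<alpha>)" using rho_ge_1 \<alpha>1 by (simp add: mult_le_cancel_right1)
    moreover have "0 \<le> (rho \<alpha> \<beta> - 1) * scaled_tail \<beta> a" using rho_ge_1 scaled_tail_nonneg by simp
    ultimately show ?thesis using Fab_unclamped_above_peak[OF that] by linarith
  qed
  assume a: "1 \<le> a"
  show ?thesis
  proof (cases "\<beta> \<le> a")
    case False
    then have "(rho \<alpha> \<beta> - 1) * scaled_head \<beta> a \<le> (rho \<alpha> \<beta> - 1) * scaled_head \<beta> \<beta>"
      using scaled_head_le[OF \<beta>_pos a] rho_ge_1 by (intro mult_left_mono) auto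
    then have "Fab_unclamped \<alpha> \<beta> \<beta> \<le> Fab_unclamped \<alpha> \<beta> a"
      using Fab_unclamped_below_peak[of a] Fab_unclamped_below_peak[of \<beta>] a False \<beta>1 by simp
    then show ?thesis using above[of \<beta>] by simp
  qed (rule above)
qed

lemma Fab_unclamped_le: "1 \<le> a \<Longrightarrow> Fab_unclamped \<alpha> \<beta> a \<le> 1"
proof (cases "\<beta> \<le> a")
  case False
  assume "1 \<le> a"
  then show ?thesis
    using Fab_unclamped_below_peak[of a] False rho_ge_1 scaled_head_nonneg[of \<beta> a] by simp
next
  case True
  have "poisson_peak \<beta> * (1 + scaled_tail \<beta> a) \<le> poisson_peak \<beta> * (1 + scaled_tail \<beta> \<beta>)"
    using scaled_tail_le[OF \<beta>_pos True] poisson_peak_pos[OF \<beta>_pos] by (intro mult_left_mono) auto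
  also have "\<dots> \<le> 1" by (rule poisson_peak_scaled_tail_le[OF \<beta>_pos])
  finally have "\<alpha> * (poisson_peak \<beta> * (1 + scaled_tail \<beta> a)) \<le> \<alpha>"
    using \<alpha>0 by (simp add: mult_left_le)
  then have "1 - \<alpha> + \<alpha> * poisson_peak \<beta> * scaled_tail \<beta> a \<le> 1 - \<alpha> * poisson_peak \<beta>"
    by (simp add: algebra_simps)
  then have "rho \<alpha> \<beta> * (1 - \<alpha> + \<alpha> * poisson_peak \<beta> * scaled_tail \<beta> a) \<le> rho \<alpha> \<beta> * (1 - \<alpha> * poisson_peak \<beta>)"
    using rho_ge_1 by (intro mult_left_mono) auto
  also have "\<dots> = 1"
    using one_minus_alpha_poisson_peak_pos by (simp add: rho_eq_poisson_peak)
  finally show ?thesis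
    using Fab_unclamped_above_peak[OF True] rho_minus_1 by (simp add: algebra_simps)
qed

lemma Fab_eq_Fab_unclamped: "1 \<le> a \<Longrightarrow> Fab \<alpha> \<beta> a = Fab_unclamped \<alpha> \<beta> a"
proof (induction a rule: dec_induct)
  case (step a)
  then obtain c where c: "a = Suc c" by (cases a) auto
  then show ?case using step Fab_unclamped_ge[of "Suc a"] by simp
qed simp

lemma Fab_unclamped_below_peak_bound:
  assumes "1 \<le> a" "a < \<beta>"
  shows "real \<beta> \<le> (real \<beta> - real a) * Fab_unclamped \<alpha> \<beta> (Suc a) + rho \<alpha> \<beta> * real a"
proof -
  have F: "Fab_unclamped \<alpha> \<beta> (Suc a) = 1 - (rho \<alpha> \<beta> - 1) * scaled_head \<beta> (Suc a)"
    using Fab_unclamped_below_peak[of "Suc a"] assms by simp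
  have "scaled_head \<beta> (Suc a) * (real \<beta> - real a) \<le> real a"
    using scaled_head_bound[OF \<beta>_pos, of "Suc a"] assms by simp
  then have "(rho \<alpha> \<beta> - 1) * (scaled_head \<beta> (Suc a) * (real \<beta> - real a)) \<le> (rho \<alpha> \<beta> - 1) * real a"
    using rho_ge_1 by (intro mult_left_mono) auto
  moreover have "(real \<beta> - real a) * Fab_unclamped \<alpha> \<beta> (Suc a) + rho \<alpha> \<beta> * real a - real \<beta> =
      (rho \<alpha> \<beta> - 1) * real a - (rho \<alpha> \<beta> - 1) * (scaled_head \<beta> (Suc a) * (real \<beta> - real a))"
    unfolding F by (simp add: algebra_simps)
  ultimately show ?thesis by linarith
qed

lemma Fab_unclamped_above_peak_bound:
  assumes "\<beta> < a"
  shows "(real a - real \<beta>) * Fab_unclamped \<alpha> \<beta> a + real \<beta> \<le> rho \<alpha> \<beta> * Vab \<alpha> \<beta> a"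
proof -
  have "(rho \<alpha> \<beta> - 1) * ((real a - real \<beta>) * scaled_tail \<beta> a) \<le> (rho \<alpha> \<beta> - 1) * real \<beta>"
    using scaled_tail_bound[OF \<beta>_pos assms] rho_ge_1 by (intro mult_left_mono) auto
  moreover have "rho \<alpha> \<beta> * Vab \<alpha> \<beta> a - (real a - real \<beta>) * Fab_unclamped \<alpha> \<beta> a - real \<beta> =
      (rho \<alpha> \<beta> - 1) * real \<beta> - (rho \<alpha> \<beta> - 1) * ((real a - real \<beta>) * scaled_tail \<beta> a)"
    unfolding Fab_unclamped_above_peak[of a, OF less_imp_le[OF assms]] Vab_above[of \<beta> a \<alpha>, OF less_imp_le[OF assms]]
    by (simp add: algebra_simps)
  ultimately show ?thesis by linarith
qed

text \<open>The inequality is affine in \<open>x\<close>; it is an equality at \<open>x = a\<close> by the recursion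
  and holds at the smallest admissible value \<open>x = max 0 (a - \<beta>)\<close> by the bounds at and
  around the peak \<open>\<beta>\<close>.\<close>

lemma Fab_unclamped_affine_bound:
  assumes a: "1 \<le> a" and xa: "x \<le> a" and xb: "a \<le> x + \<beta>"
  shows "0 \<le> rho \<alpha> \<beta> * Vab \<alpha> \<beta> a - real \<beta> + (real \<beta> - real a) * Fab_unclamped \<alpha> \<beta> (Suc a)
              + real x * (Fab_unclamped \<alpha> \<beta> (Suc a) - Fab_unclamped \<alpha> \<beta> a)"
proof -
  define f where "f = Fab_unclamped \<alpha> \<beta> a"
  define g where "g = Fab_unclamped \<alpha> \<beta> (Suc a)"
  define L where "L t = rho \<alpha> \<beta> * Vab \<alpha> \<beta> a - real \<beta> + (real \<beta> - real a) * g + t * (g - f)" for t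
  have L_a: "L (real a) = 0"
    unfolding L_def f_def g_def using Fab_unclamped_Suc[OF a] by (simp add: algebra_simps)
  define x0 where "x0 = (if a \<le> \<beta> then 0 else real a - real \<beta>)"
  have L_x0: "0 \<le> L x0"
  proof (cases "a < \<beta>")
    case True
    then show ?thesis
      unfolding L_def x0_def g_def using Fab_unclamped_below_peak_bound[OF a True] Vab_below[of a \<beta> \<alpha>]
      by (simp add: algebra_simps)
  next
    case False
    show ?thesis
    proof (cases "a = \<beta>")
      case True
      then show ?thesis unfolding L_def x0_def using Vab_below[of a \<beta> \<alpha>] rho_ge_1 \<beta>1
        by (simp add: algebra_simps)
    next
      case False
      then have "\<beta> < a" using \<open>\<not> a < \<beta>\<close> by simp
      then show ?thesis
        unfolding L_def x0_def f_def using Fab_unclamped_above_peak_bound[OF \<open>\<beta> < a\<close>]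
        by (simp add: algebra_simps)
    qed
  qed
  have "0 \<le> L (real x)"
  proof (cases "0 \<le> g - f")
    case True
    have "L (real x) = L x0 + (real x - x0) * (g - f)" unfolding L_def by (simp add: algebra_simps)
    moreover have "x0 \<le> real x" unfolding x0_def using xb by auto
    ultimately show ?thesis using L_x0 True by simp
  next
    case False
    have "L (real x) = L (real a) + (real a - real x) * (f - g)" unfolding L_def by (simp add: algebra_simps)
    then show ?thesis using L_a False xa by simp
  qed
  then show ?thesis unfolding L_def f_def g_def .
qed

lemma Fab_smoothness:
  "Vab \<alpha> \<beta> (y + z) \<le> rho \<alpha> \<beta> * Vab \<alpha> \<beta> (x + z) - real x * Fab \<alpha> \<beta> (x + z) + real y * Fab \<alpha> \<beta> (Suc (x + z))"
proof (cases "x + z = 0")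
  case True
  then show ?thesis using \<beta>1 Vab_le[OF \<alpha>0, of \<beta> y] by (simp add: Vab_below)
next
  case False
  define a where "a = x + z"
  have a: "1 \<le> a" using False a_def by linarith
  have "Vab \<alpha> \<beta> (y + z) \<le> rho \<alpha> \<beta> * Vab \<alpha> \<beta> a - real x * Fab_unclamped \<alpha> \<beta> a + real y * Fab_unclamped \<alpha> \<beta> (Suc a)"
  proof (rule Vab_smoothness_by_cases[where b = "real \<beta>" and z = "real z" and \<alpha> = \<alpha>])
    show "0 \<le> rho \<alpha> \<beta> * Vab \<alpha> \<beta> a - real \<beta> + (real \<beta> - (real x + real z)) * Fab_unclamped \<alpha> \<beta> (Suc a)
        + real x * (Fab_unclamped \<alpha> \<beta> (Suc a) - Fab_unclamped \<alpha> \<beta> a)" if "real z \<le> real \<beta>"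
      using Fab_unclamped_affine_bound[OF a, of x] that a_def by simp
    show "(real x + real z - real \<beta>) * Fab_unclamped \<alpha> \<beta> a + real \<beta> \<le> rho \<alpha> \<beta> * Vab \<alpha> \<beta> a"
      if "real \<beta> < real z"
      using Fab_unclamped_above_peak_bound[of a] that a_def by simp
    show "1 - \<alpha> \<le> Fab_unclamped \<alpha> \<beta> (Suc a)" "Fab_unclamped \<alpha> \<beta> (Suc a) \<le> 1" "1 - \<alpha> \<le> Fab_unclamped \<alpha> \<beta> a"
      using Fab_unclamped_ge Fab_unclamped_le a by auto
    show "Vab \<alpha> \<beta> (y + z) = real y + real z" if "real y + real z \<le> real \<beta>"
      using that by (subst Vab_below) auto
    show "Vab \<alpha> \<beta> (y + z) = (1 - \<alpha>) * (real y + real z) + \<alpha> * real \<beta>" if "real \<beta> \<le> real y + real z"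
      using that by (subst Vab_above) auto
  qed simp_all
  then show ?thesis using Fab_eq_Fab_unclamped[OF a] Fab_eq_Fab_unclamped[of "Suc a"] a_def
    by simp
qed

lemma poa_Fab_ge: "valid_game n R A \<Longrightarrow> 1 / rho \<alpha> \<beta> \<le> poa (Vab \<alpha> \<beta>) (Fab \<alpha> \<beta>) n A"
  by (rule poa_ge_inverse_smoothness) (use Vab_nonneg[OF \<alpha>0 \<alpha>1] rho_ge_1 Fab_smoothness in auto)

end

section \<open>Optimality: a family of games with welfare ratio close to \<open>1 / rho\<close>\<close>

text \<open>Resource type \<open>a \<le> N\<close> carries \<open>a\<close> players in the equilibrium and
  \<open>worst_opt_load b N a\<close> in the optimum, with multiplicity proportional to the
  Poisson weight \<open>b\<^sup>a / a!\<close>. With these weights the equilibrium condition telescopes to an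
  equality whatever the utility function, and the welfare ratio tends to
  \<open>1 - \<alpha> * poisson_peak b = 1 / rho \<alpha> b\<close> as \<open>N\<close> grows.\<close>

definition worst_copies :: "nat \<Rightarrow> nat \<Rightarrow> nat \<Rightarrow> nat" where
  "worst_copies b N a = (if a = 0 then b * fact N else (fact N div fact a) * b ^ a)"

definition worst_opt_load :: "nat \<Rightarrow> nat \<Rightarrow> nat \<Rightarrow> nat" where
  "worst_opt_load b N a = (if a = 0 then 1 else if a < N then b else 0)"

lemma real_worst_copies:
  "1 \<le> a \<Longrightarrow> a \<le> N \<Longrightarrow> real (worst_copies b N a) = fact N * exp_term b a"
  by (simp add: worst_copies_def exp_term_def real_of_nat_div fact_dvd)

lemma real_worst_copies_0: "real (worst_copies b N 0) = real b * fact N"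
  by (simp add: worst_copies_def)

lemma worst_equilibrium_balance:
  fixes F :: "nat \<Rightarrow> real"
  assumes N: "1 \<le> N"
  shows "(\<Sum>a\<le>N. real (worst_copies b N a) * (real (worst_opt_load b N a) * F (Suc a)))
       = (\<Sum>a\<le>N. real (worst_copies b N a) * (real a * F a))"
proof -
  define out where "out a = real (worst_copies b N a) * (real (worst_opt_load b N a) * F (Suc a))" for a
  define inc where "inc a = real (worst_copies b N a) * (real a * F a)" for a
  have shift: "out a = inc (Suc a)" if "a < N" for a
  proof (cases "a = 0")
    case True
    then show ?thesis
      unfolding out_def inc_def worst_opt_load_def using real_worst_copies[of 1 N b] N
      by (simp add: real_worst_copies_0 exp_term_def)
  next
    case False
    have "real (worst_copies b N a) * real b = real (worst_copies b N (Suc a)) * real (Suc a)"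
      using real_worst_copies[of a N b] real_worst_copies[of "Suc a" N b] False that
      by (simp add: exp_term_Suc)
    then show ?thesis unfolding out_def inc_def worst_opt_load_def using False that
      by (simp add: mult.assoc[symmetric])
  qed
  obtain M where M: "N = Suc M" using N by (cases N) auto
  have "(\<Sum>a\<le>N. out a) = (\<Sum>a<N. inc (Suc a))"
    using shift by (simp add: M out_def worst_opt_load_def lessThan_Suc_atMost[symmetric])
  also have "\<dots> = (\<Sum>a\<le>N. inc a)"
    unfolding M lessThan_Suc_atMost sum.atMost_Suc_shift[of inc] by (simp add: inc_def)
  finally show ?thesis unfolding out_def inc_def .
qed

context
  fixes \<alpha> :: real and \<beta> :: nat
  assumes \<alpha>0: "0 \<le> \<alpha>" and \<alpha>1: "\<alpha> \<le> 1" and \<beta>1: "1 \<le> \<beta>"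
begin

lemma sum_exp_term_Vab:
  "\<beta> \<le> N \<Longrightarrow> (\<Sum>a\<le>N. exp_term \<beta> a * Vab \<alpha> \<beta> a) =
     real \<beta> * (\<Sum>a<N. exp_term \<beta> a) - \<alpha> * real \<beta> * (exp_term \<beta> \<beta> - exp_term \<beta> N)"
proof (induction N rule: dec_induct)
  case base
  have "(\<Sum>a\<le>\<beta>. exp_term \<beta> a * Vab \<alpha> \<beta> a) = (\<Sum>a\<le>\<beta>. exp_term \<beta> a * real a)"
    by (intro sum.cong refl) (simp add: Vab_below)
  then show ?case using sum_exp_term_mult_index by simp
next
  case (step N)
  have "exp_term \<beta> (Suc N) * Vab \<alpha> \<beta> (Suc N) =
      (1 - \<alpha>) * (exp_term \<beta> (Suc N) * real (Suc N)) + \<alpha> * real \<beta> * exp_term \<beta> (Suc N)"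
    using step(1) by (simp add: Vab_above algebra_simps)
  also have "\<dots> = (1 - \<alpha>) * (real \<beta> * exp_term \<beta> N) + \<alpha> * real \<beta> * exp_term \<beta> (Suc N)"
    by (simp add: exp_term_Suc)
  finally show ?case using step(3) by (simp add: algebra_simps)
qed

lemma worst_ratio_le:
  assumes E1: "1 \<le> E" and E: "E \<le> exp (real \<beta>)"
  shows "1 - \<alpha> * (exp_term \<beta> \<beta> - exp_term \<beta> N) / E \<le> 1 / rho \<alpha> \<beta> + exp_term \<beta> N"
proof -
  have "poisson_peak \<beta> \<le> exp_term \<beta> \<beta> / E"
    unfolding poisson_peak_def using mult_left_mono[OF E exp_term_nonneg[of \<beta> \<beta>]] E1
    by (simp add: exp_minus field_simps)
  then have "\<alpha> * poisson_peak \<beta> \<le> \<alpha> * (exp_term \<beta> \<beta> / E)" using \<alpha>0 by (rule mult_left_mono)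
  moreover have "\<alpha> * (exp_term \<beta> N / E) \<le> exp_term \<beta> N"
  proof -
    have "exp_term \<beta> N / E \<le> exp_term \<beta> N"
      using E1 exp_term_nonneg[of \<beta> N] by (simp add: divide_le_eq mult_le_cancel_left1)
    moreover have "\<alpha> * (exp_term \<beta> N / E) \<le> exp_term \<beta> N / E"
      using \<alpha>0 \<alpha>1 E1 exp_term_nonneg[of \<beta> N] by (intro mult_left_le_one_le) auto
    ultimately show ?thesis by linarith
  qed
  ultimately show ?thesis
    using E1 by (simp add: rho_eq_poisson_peak diff_divide_distrib right_diff_distrib)
qed

lemma sum_worst_copies_Vab:
  assumes N: "\<beta> \<le> N"
  shows "(\<Sum>a\<le>N. real (worst_copies \<beta> N a) * Vab \<alpha> \<beta> a) =
    fact N * (real \<beta> * (\<Sum>a<N. exp_term \<beta> a) - \<alpha> * real \<beta> * (exp_term \<beta> \<beta> - exp_term \<beta> N))"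
proof -
  have "real (worst_copies \<beta> N a) * Vab \<alpha> \<beta> a = fact N * (exp_term \<beta> a * Vab \<alpha> \<beta> a)" if "a \<le> N" for a
    using that by (cases "a = 0") (simp_all add: real_worst_copies)
  then have "(\<Sum>a\<le>N. real (worst_copies \<beta> N a) * Vab \<alpha> \<beta> a) = (\<Sum>a\<le>N. fact N * (exp_term \<beta> a * Vab \<alpha> \<beta> a))"
    by (intro sum.cong refl) simp
  then show ?thesis unfolding sum_exp_term_Vab[OF N, symmetric] by (simp add: sum_distrib_left)
qed

lemma sum_worst_copies_Vab_opt_load:
  assumes N: "1 \<le> N"
  shows "(\<Sum>a\<le>N. real (worst_copies \<beta> N a) * Vab \<alpha> \<beta> (worst_opt_load \<beta> N a)) =
    fact N * (real \<beta> * (\<Sum>a<N. exp_term \<beta> a))"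
proof -
  have "(\<Sum>a\<le>N. real (worst_copies \<beta> N a) * Vab \<alpha> \<beta> (worst_opt_load \<beta> N a)) =
      (\<Sum>a\<le>N. if a < N then fact N * (real \<beta> * exp_term \<beta> a) else 0)"
    using \<beta>1 N by (intro sum.cong refl)
      (auto simp: worst_opt_load_def real_worst_copies real_worst_copies_0 Vab_below simp del: of_nat_fact)
  also have "\<dots> = (\<Sum>a<N. fact N * (real \<beta> * exp_term \<beta> a))"
    by (simp add: lessThan_Suc_atMost[symmetric] sum.If_cases)
  finally show ?thesis by (simp add: sum_distrib_left)
qed

lemma poa_worst_instance_le:
  assumes N: "\<beta> \<le> N"
  shows "\<exists>n R A. valid_game n R A \<and> poa (Vab \<alpha> \<beta>) F n A \<le> 1 / rho \<alpha> \<beta> + exp_term \<beta> N"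
proof -
  let ?m = "worst_copies \<beta> N" and ?Y = "worst_opt_load \<beta> N" and ?V = "Vab \<alpha> \<beta>"
  define E where "E = (\<Sum>a<N. exp_term \<beta> a)"
  have N1: "1 \<le> N" using N \<beta>1 by simp
  have E1: "1 \<le> E"
    unfolding E_def using N1 member_le_sum[of 0 "{..<N}" "exp_term \<beta>"] exp_term_nonneg by auto
  note eq_welfare = sum_worst_copies_Vab[OF N, folded E_def]
  note opt_welfare = sum_worst_copies_Vab_opt_load[OF N1, folded E_def]
  have "\<exists>R A. valid_game (N + \<beta>) R A \<and>
      poa ?V F (N + \<beta>) A \<le> (\<Sum>a\<le>N. real (?m a) * ?V a) / (\<Sum>a\<le>N. real (?m a) * ?V (?Y a))"
  proof (rule ring_game_copies_poa_le[where X = "\<lambda>a. a"])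
    show "a + ?Y a \<le> N + \<beta>" if "a \<in> {..N}" for a
      using that \<beta>1 by (auto simp: worst_opt_load_def)
    show "(\<Sum>a\<le>N. real (?m a) * (real (?Y a) * F (Suc a))) \<le> (\<Sum>a\<le>N. real (?m a) * (real a * F a))"
      using worst_equilibrium_balance[OF N1] by simp
    show "0 < (\<Sum>a\<le>N. real (?m a) * ?V (?Y a))"
      unfolding opt_welfare using E1 \<beta>1 by simp
  qed (use \<beta>1 Vab_nonneg[OF \<alpha>0 \<alpha>1] in auto)
  then obtain R A where valid: "valid_game (N + \<beta>) R A"
    and poa: "poa ?V F (N + \<beta>) A \<le> (\<Sum>a\<le>N. real (?m a) * ?V a) / (\<Sum>a\<le>N. real (?m a) * ?V (?Y a))"
    by blast
  have "(\<Sum>a\<le>N. real (?m a) * ?V a) / (\<Sum>a\<le>N. real (?m a) * ?V (?Y a))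
      = 1 - \<alpha> * (exp_term \<beta> \<beta> - exp_term \<beta> N) / E"
    unfolding eq_welfare opt_welfare using E1 \<beta>1 by (simp add: field_simps)
  also have "\<dots> \<le> 1 / rho \<alpha> \<beta> + exp_term \<beta> N"
    by (rule worst_ratio_le[OF E1]) (simp add: E_def sum_exp_term_le_exp)
  finally show ?thesis using valid poa by fastforce
qed

lemma poa_class_le_inverse_rho: "poa_class (Vab \<alpha> \<beta>) F \<le> 1 / rho \<alpha> \<beta>"
proof (rule field_le_epsilon)
  fix \<epsilon> :: real assume "0 < \<epsilon>"
  then obtain N where N: "\<beta> \<le> N" "exp_term \<beta> N < \<epsilon>"
    using exp_term_tendsto_0[of \<beta>] eventually_ge_at_top[of \<beta>]
    by (metis (no_types, lifting) eventually_at_top_linorder order_tendstoD(2) nle_le)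
  obtain n R A where "valid_game n R A" "poa (Vab \<alpha> \<beta>) F n A \<le> 1 / rho \<alpha> \<beta> + exp_term \<beta> N"
    using poa_worst_instance_le[OF N(1)] by blast
  then show "poa_class (Vab \<alpha> \<beta>) F \<le> 1 / rho \<alpha> \<beta> + \<epsilon>"
    using poa_class_le_poa[of n R A "Vab \<alpha> \<beta>" F] Vab_nonneg[OF \<alpha>0 \<alpha>1] N(2) by force
qed

end

theorem lemma1:
  fixes \<alpha> :: real and \<beta> :: nat
  assumes "0 \<le> \<alpha>" and "\<alpha> \<le> 1" and "1 \<le> \<beta>"
  shows "poa_class (Vab \<alpha> \<beta>) (Fab \<alpha> \<beta>) = 1 / rho \<alpha> \<beta>
         \<and> (\<forall>F :: nat \<Rightarrow> real. poa_class (Vab \<alpha> \<beta>) F \<le> poa_class (Vab \<alpha> \<beta>) (Fab \<alpha> \<beta>))"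
proof -
  have "1 / rho \<alpha> \<beta> \<le> poa_class (Vab \<alpha> \<beta>) (Fab \<alpha> \<beta>)"
    using poa_Fab_ge[OF assms] by (rule poa_class_ge)
  then have "poa_class (Vab \<alpha> \<beta>) (Fab \<alpha> \<beta>) = 1 / rho \<alpha> \<beta>"
    using poa_class_le_inverse_rho[OF assms] by (rule antisym[rotated])
  then show ?thesis using poa_class_le_inverse_rho[OF assms] by simp
qed

end
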